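(* Let $\mathbf{R}$ be an $N$-dimensional random vector with continuous marginal distributions, let $\boldsymbol{c}\in\mathbb{R}^N$ and $\mathbf{X}=\mathbf{R}-\boldsymbol{c}$. Let $F_{\mathbf{X}}(\mathbf{x})=\mathbb{P}(\mathbf{X}\le\mathbf{x})$, $\bar F_{\mathbf{X}}(\mathbf{x})=\mathbb{P}(\mathbf{X}>\mathbf{x})$ (componentwise inequalities), let $F_{X_i}$ and $\bar F_{X_i}=1-F_{X_i}$ be the marginal distribution and survival functions, let $\mathbf{U}=(F_{X_1}(X_1),\ldots,F_{X_N}(X_N))$, let $C_{\mathbf{U}}$ be the joint distribution function of $\mathbf{U}$ (the copula) and $\bar C_{\mathbf{U}}$ the joint distribution function of $\mathbf{1}_N-\mathbf{U}$ (the survival copula). Define $\Delta_{\mathbf{U}}=\tfrac12(C_{\mathbf{U}}-\bar C_{\mathbf{U}})$ and $C_{\mathbf{U}^S}=\tfrac12(C_{\mathbf{U}}+\bar C_{\mathbf{U}})$. Then for all $\mathbf{x}\in\mathbb{R}^N$, $$F_{\mathbf{X}}(\mathbf{x})-\bar F_{\mathbf{X}}(-\mathbf{x}) = \Big[C_{\mathbf{U}^S}(F_{X_1}(x_1),\ldots,F_{X_N}(x_N)) - C_{\mathbf{U}^S}(\bar F_{X_1}(-x_1),\ldots,\bar F_{X_N}(-x_N))\Big] + \Big[\Delta_{\mathbf{U}}(F_{X_1}(x_1),\ldots,F_{X_N}(x_N)) + \Delta_{\mathbf{U}}(\bar F_{X_1}(-x_1),\ldots,\bar F_{X_N}(-x_N))\Big].$$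 Moreover: (1) the first bracket is zero for all $\mathbf{x}\in\mathbb{R}^N$ if and only if marginal symmetry holds (each $X_i\overset{d}{=}-X_i$); (2) the second bracket is zero for all $\mathbf{x}\in\mathbb{R}^N$ if and only if copula central symmetry holds ($\mathbf{U}\overset{d}{=}\mathbf{1}_N-\mathbf{U}$); (3) $\mathbf{R}$ is centrally symmetric with respect to $\boldsymbol{c}$ (i.e. $\mathbf{X}\overset{d}{=}-\mathbf{X}$) if and only if it is both marginally symmetric and copula centrally symmetric.
   Context: $\mathbf{1}_N$ is the $N$-vector of ones. $C_{\mathbf{U}^S}$ is a copula (the distribution function of the mixture equal to $\mathbf{U}$ or $\mathbf{1}_N-\mathbf{U}$ with probability $1/2$ each). *)

theory Defs
  imports "HOL-Probability.Probability"
begin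

text \<open>Random vectors are maps into real^'n (N = CARD('n)); inequalities are componentwise.\<close>

definition joint_cdf :: "'a measure \<Rightarrow> ('a \<Rightarrow> real^'n) \<Rightarrow> real^'n \<Rightarrow> real" where
  "joint_cdf M X x = measure M {\<omega> \<in> space M. \<forall>i. X \<omega> $ i \<le> x $ i}"

definition joint_surv :: "'a measure \<Rightarrow> ('a \<Rightarrow> real^'n) \<Rightarrow> real^'n \<Rightarrow> real" where
  "joint_surv M X x = measure M {\<omega> \<in> space M. \<forall>i. X \<omega> $ i > x $ i}"

definition marg_cdf :: "'a measure \<Rightarrow> ('a \<Rightarrow> real^'n) \<Rightarrow> 'n \<Rightarrow> real \<Rightarrow> real" where
  "marg_cdf M X i t = measure M {\<omega> \<in> space M. X \<omega> $ i \<le> t}"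

definition marg_surv :: "'a measure \<Rightarrow> ('a \<Rightarrow> real^'n) \<Rightarrow> 'n \<Rightarrow> real \<Rightarrow> real" where
  "marg_surv M X i t = 1 - marg_cdf M X i t"

definition copula_vec :: "'a measure \<Rightarrow> ('a \<Rightarrow> real^'n) \<Rightarrow> 'a \<Rightarrow> real^'n" where
  "copula_vec M X \<omega> = (\<chi> i. marg_cdf M X i (X \<omega> $ i))"

definition copula :: "'a measure \<Rightarrow> ('a \<Rightarrow> real^'n) \<Rightarrow> real^'n \<Rightarrow> real" where
  "copula M X u = joint_cdf M (copula_vec M X) u"

definition surv_copula :: "'a measure \<Rightarrow> ('a \<Rightarrow> real^'n) \<Rightarrow> real^'n \<Rightarrow> real" where
  "surv_copula M X u = joint_cdf M (\<lambda>\<omega>. (\<chi> i. 1) - copula_vec M X \<omega>) u"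

definition copula_delta :: "'a measure \<Rightarrow> ('a \<Rightarrow> real^'n) \<Rightarrow> real^'n \<Rightarrow> real" where
  "copula_delta M X u = (copula M X u - surv_copula M X u) / 2"

definition copula_sym :: "'a measure \<Rightarrow> ('a \<Rightarrow> real^'n) \<Rightarrow> real^'n \<Rightarrow> real" where
  "copula_sym M X u = (copula M X u + surv_copula M X u) / 2"

end

theory Submission
  imports Defs
begin

text \<open>
  With continuous margins, \<open>U\<^sub>i = F\<^sub>i(X\<^sub>i)\<close> is uniform and atomless, so almost surely
  \<open>{X \<le> x} = {U \<le> F(x)}\<close> and \<open>{X > -x} = {1 - U \<le> S(-x)}\<close>, where \<open>S\<^sub>i = 1 - F\<^sub>i\<close>.
  Hence \<open>F\<^sub>X(x) = C(F(x))\<close> and \<open>P(X > -x) = C'(S(-x))\<close> for the survival copula \<open>C'\<close>, and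
  the decomposition is algebra. Both copulas have uniform margins and are 1-Lipschitz for
  the \<open>\<ell>\<^sub>1\<close>-distance; sending all coordinates but one to \<open>+\<infinity>\<close> reduces the first bracket to
  \<open>F\<^sub>i(t) - S\<^sub>i(-t)\<close>, which vanishes iff the margins are symmetric.

  If the second bracket vanishes, \<open>\<Delta>(F(x)) = -\<Delta>(S(-x))\<close>. Choose \<open>x\<^sub>0, x\<^sub>1, \<dots>\<close> such that
  \<open>F(x\<^sub>n\<^sub>+\<^sub>1)\<close> is within \<open>\<epsilon>/2\<^sup>n\<^sup>+\<^sup>1\<close> of \<open>S(-x\<^sub>n)\<close>, approaching it from the side of \<open>F(x\<^sub>n)\<close>.
  Then \<open>(-1)\<^sup>n \<Delta>(F(x\<^sub>n))\<close> stays within \<open>N\<epsilon>\<close> of \<open>\<Delta>(F(x\<^sub>0))\<close>, while every coordinate of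
  \<open>F(x\<^sub>n)\<close> is monotone, hence convergent, so consecutive values \<open>\<Delta>(F(x\<^sub>n))\<close> become close.
  Thus \<open>\<Delta>\<close> vanishes on the range of \<open>F\<close>, which is dense in the unit cube, and \<open>C = C'\<close>.

  Central symmetry means \<open>F\<^sub>X(x) = P(X > -x)\<close> for all \<open>x\<close>, i.e. that the sum of the brackets
  vanishes; it implies marginal symmetry, and then both brackets vanish.
\<close>

section \<open>Joint distribution functions\<close>

lemma vec_nth_borel_measurable[measurable]: "(\<lambda>v::real^'n. v $ i) \<in> borel_measurable borel"
  by (intro borel_measurable_continuous_on[where f="\<lambda>v. v $ i"]) (auto intro: continuous_intros)

lemma borel_measurable_vecI:
  fixes f :: "'a \<Rightarrow> real^'n"
  shows "(\<And>i. (\<lambda>x. f x $ i) \<in> borel_measurable M) \<Longrightarrow> f \<in> borel_measurable M"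
  by (subst borel_measurable_euclidean_space) (auto simp: Basis_vec_def inner_axis)

lemma joint_cdf_eq_measure_distr:
  fixes V :: "'a \<Rightarrow> real^'n"
  assumes "V \<in> borel_measurable M"
  shows "joint_cdf M V a = measure (distr M borel V) {..a}"
  unfolding joint_cdf_def using assms
  by (subst measure_distr) (auto simp: less_eq_vec_def vimage_def Int_def conj_commute)

lemma joint_cdf_unique:
  fixes V W :: "'a \<Rightarrow> real^'n"
  assumes "prob_space M" "V \<in> borel_measurable M" "W \<in> borel_measurable M"
    and eq: "\<And>a. joint_cdf M V a = joint_cdf M W a"
  shows "distr M borel V = distr M borel W"
proof (rule measure_eqI_generator_eq[where \<Omega>=UNIV and E="range atMost" and A="\<lambda>n. {..(\<chi> i. real n)}"])
  interpret V: prob_space "distr M borel V" by (intro prob_space.prob_space_distr assms)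
  interpret W: prob_space "distr M borel W" by (intro prob_space.prob_space_distr assms)
  show "Int_stable (range (atMost :: real^'n \<Rightarrow> _))"
  proof (rule Int_stableI_image)
    fix a b :: "real^'n"
    show "\<exists>c\<in>UNIV. {..a} \<inter> {..b} = {..c}"
      by (intro bexI[of _ "inf a b"]) auto
  qed
  show "emeasure (distr M borel V) A = emeasure (distr M borel W) A" if "A \<in> range atMost" for A
    using that eq by (auto simp: V.emeasure_eq_measure W.emeasure_eq_measure
        joint_cdf_eq_measure_distr[OF assms(2)] joint_cdf_eq_measure_distr[OF assms(3)])
  have "x \<in> (\<Union>n. {..(\<chi> i. real n)})" for x :: "real^'n"
  proof -
    obtain n :: nat where "Max (range (\<lambda>i. x $ i)) \<le> real n"
      using real_arch_simple by blast
    then have "x \<le> (\<chi> i. real n)"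
      by (auto simp: less_eq_vec_def intro: order_trans[OF Max_ge])
    then show ?thesis by auto
  qed
  then show "(\<Union>n. {..(\<chi> i. real n)}) = (UNIV :: (real^'n) set)"
    by auto
  show "emeasure (distr M borel V) {..(\<chi> i. real n)} \<noteq> \<infinity>" for n
    by (simp add: V.emeasure_eq_measure)
qed (auto simp: borel_eq_atMost)

lemma (in prob_space) joint_cdf_le_add_dist:
  fixes V :: "'a \<Rightarrow> real^'n"
  assumes [measurable]: "V \<in> borel_measurable M"
    and marg_lip: "\<And>i s t. s \<le> t \<Longrightarrow>
      measure M {\<omega>\<in>space M. V \<omega> $ i \<le> t} - measure M {\<omega>\<in>space M. V \<omega> $ i \<le> s} \<le> t - s"
  shows "joint_cdf M V a \<le> joint_cdf M V b + (\<Sum>i\<in>UNIV. \<bar>a$i - b$i\<bar>)"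
proof -
  define D where "D i = {\<omega>\<in>space M. b$i < V \<omega> $ i \<and> V \<omega> $ i \<le> a$i}" for i
  have [measurable]: "D i \<in> sets M" for i
    unfolding D_def by measurable
  have measure_D: "measure M (D i) \<le> \<bar>a$i - b$i\<bar>" for i
  proof (cases "a$i \<le> b$i")
    case True
    then have "D i = {}" by (auto simp: D_def)
    then show ?thesis by simp
  next
    case False
    then have "D i = {\<omega>\<in>space M. V \<omega> $ i \<le> a$i} - {\<omega>\<in>space M. V \<omega> $ i \<le> b$i}"
      by (auto simp: D_def)
    also have "measure M \<dots>
        = measure M {\<omega>\<in>space M. V \<omega> $ i \<le> a$i} - measure M {\<omega>\<in>space M. V \<omega> $ i \<le> b$i}"
      using False by (intro finite_measure_Diff) auto
    finally show ?thesis
      using marg_lip[of "b$i" "a$i" i] False by simp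
  qed
  have "joint_cdf M V a \<le> measure M ({\<omega>\<in>space M. \<forall>i. V \<omega> $ i \<le> b $ i} \<union> (\<Union>i. D i))"
    unfolding joint_cdf_def by (intro finite_measure_mono) (auto simp: D_def not_le)
  also have "\<dots> \<le> joint_cdf M V b + measure M (\<Union>i. D i)"
    unfolding joint_cdf_def by (intro measure_Un_le) auto
  also have "measure M (\<Union>i. D i) \<le> (\<Sum>i\<in>UNIV. measure M (D i))"
    by (intro finite_measure_subadditive_finite) auto
  also have "\<dots> \<le> (\<Sum>i\<in>UNIV. \<bar>a$i - b$i\<bar>)"
    by (intro sum_mono measure_D)
  finally show ?thesis by simp
qed

lemma (in prob_space) joint_cdf_lipschitz:
  fixes V :: "'a \<Rightarrow> real^'n"
  assumes "V \<in> borel_measurable M"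
    and "\<And>i s t. s \<le> t \<Longrightarrow>
      measure M {\<omega>\<in>space M. V \<omega> $ i \<le> t} - measure M {\<omega>\<in>space M. V \<omega> $ i \<le> s} \<le> t - s"
  shows "\<bar>joint_cdf M V a - joint_cdf M V b\<bar> \<le> (\<Sum>i\<in>UNIV. \<bar>a$i - b$i\<bar>)"
  using joint_cdf_le_add_dist[OF assms, of a b] joint_cdf_le_add_dist[OF assms, of b a]
  by (simp add: abs_minus_commute)

lemma joint_cdf_marginal:
  fixes V :: "'a \<Rightarrow> real^'n"
  assumes "\<And>\<omega> j. \<omega> \<in> space M \<Longrightarrow> V \<omega> $ j \<le> 1"
  shows "joint_cdf M V (\<chi> j. if j = i then t else 1) = measure M {\<omega>\<in>space M. V \<omega> $ i \<le> t}"
  unfolding joint_cdf_def using assms by (intro arg_cong[where f="measure M"]) auto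

lemma joint_cdf_unit_cube:
  fixes V :: "'a \<Rightarrow> real^'n"
  assumes "\<And>\<omega> j. \<omega> \<in> space M \<Longrightarrow> 0 \<le> V \<omega> $ j \<and> V \<omega> $ j \<le> 1"
  shows "joint_cdf M V a = (if \<exists>j. a$j < 0 then 0 else joint_cdf M V (\<chi> j. min 1 (a$j)))"
proof (cases "\<exists>j. a$j < 0")
  case True
  then obtain j where "a$j < 0" by blast
  then have "{\<omega>\<in>space M. \<forall>j. V \<omega> $ j \<le> a $ j} = {}"
    using assms by (fastforce dest: spec[of _ j])
  then show ?thesis
    using True unfolding joint_cdf_def by (simp only: measure_empty if_True)
next
  case False
  have "V \<omega> $ j \<le> a $ j \<longleftrightarrow> V \<omega> $ j \<le> min 1 (a $ j)" if "\<omega> \<in> space M" for \<omega> j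
    using assms[OF that, of j] by auto
  then have "{\<omega>\<in>space M. \<forall>j. V \<omega> $ j \<le> a $ j}
      = {\<omega>\<in>space M. \<forall>j. V \<omega> $ j \<le> (\<chi> j. min 1 (a$j)) $ j}"
    by auto
  then show ?thesis
    using False unfolding joint_cdf_def by simp
qed

lemma tendsto_lipschitz_vec:
  fixes D :: "real^'n \<Rightarrow> real" and u :: "'b \<Rightarrow> real^'n"
  assumes lip: "\<And>a b. \<bar>D a - D b\<bar> \<le> (\<Sum>i\<in>UNIV. \<bar>a$i - b$i\<bar>)"
    and lim: "\<And>i. ((\<lambda>s. u s $ i) \<longlongrightarrow> u0 $ i) F"
  shows "((\<lambda>s. D (u s)) \<longlongrightarrow> D u0) F"
proof -
  have "((\<lambda>s. \<Sum>i\<in>UNIV. \<bar>u s $ i - u0 $ i\<bar>) \<longlongrightarrow> (\<Sum>i\<in>(UNIV::'n set). \<bar>u0 $ i - u0 $ i\<bar>)) F"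
    by (intro tendsto_sum tendsto_rabs tendsto_diff lim tendsto_const)
  then have dist_lim: "((\<lambda>s. \<Sum>i\<in>UNIV. \<bar>u s $ i - u0 $ i\<bar>) \<longlongrightarrow> 0) F"
    by simp
  have "\<forall>s. norm (D (u s) - D u0) \<le> (\<Sum>i\<in>UNIV. \<bar>u s $ i - u0 $ i\<bar>)"
    using lip by simp
  from Lim_null_comparison[OF always_eventually[OF this] dist_lim]
  show ?thesis
    by (simp add: LIM_zero_iff)
qed

section \<open>An alternating functional equation\<close>

text \<open>
  Moving from \<open>t\<close> to \<open>t'\<close> brings \<open>g t'\<close> within \<open>\<delta>\<close> of \<open>h t\<close> without crossing it. Only
  approximate matching is possible in general, as \<open>g\<close> need not attain the values \<open>0\<close> and \<open>1\<close>.
\<close>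

definition tracking_step :: "(real \<Rightarrow> real) \<Rightarrow> (real \<Rightarrow> real) \<Rightarrow> real \<Rightarrow> real \<Rightarrow> real \<Rightarrow> bool" where
  "tracking_step g h \<delta> t t' \<longleftrightarrow> \<bar>g t' - h t\<bar> \<le> \<delta>
     \<and> (g t \<le> h t \<longrightarrow> t \<le> t' \<and> g t' \<le> h t) \<and> (h t \<le> g t \<longrightarrow> t' \<le> t \<and> h t \<le> g t')"

lemma exists_tracking_step:
  fixes g h :: "real \<Rightarrow> real"
  assumes "mono g" and g01: "\<And>t. 0 \<le> g t \<and> g t \<le> 1" and h01: "\<And>t. 0 \<le> h t \<and> h t \<le> 1"
    and g_surj: "\<And>v. 0 < v \<Longrightarrow> v < 1 \<Longrightarrow> \<exists>t. g t = v" and "0 < \<delta>"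
  shows "\<exists>t'. tracking_step g h \<delta> t t'"
proof (cases "\<bar>g t - h t\<bar> \<le> \<delta>")
  case True
  then show ?thesis
    by (intro exI[of _ t]) (auto simp: tracking_step_def)
next
  case False
  then consider (below) "g t + \<delta> < h t" | (above) "h t + \<delta> < g t"
    by linarith
  then show ?thesis
  proof cases
    case below
    obtain t' where t': "g t' = h t - \<delta>/2"
      using g_surj[of "h t - \<delta>/2"] below g01[of t] h01[of t] \<open>0 < \<delta>\<close> by auto
    have "t \<le> t'"
    proof (rule ccontr)
      assume "\<not> t \<le> t'"
      then have "g t' \<le> g t"
        using monoD[OF \<open>mono g\<close>, of t' t] by simp
      then show False
        using t' below \<open>0 < \<delta>\<close> by simp
    qed
    then show ?thesis
      using t' below \<open>0 < \<delta>\<close> by (intro exI[of _ t']) (simp add: tracking_step_def)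
  next
    case above
    obtain t' where t': "g t' = h t + \<delta>/2"
      using g_surj[of "h t + \<delta>/2"] above g01[of t] h01[of t] \<open>0 < \<delta>\<close> by auto
    have "t' \<le> t"
    proof (rule ccontr)
      assume "\<not> t' \<le> t"
      then have "g t \<le> g t'"
        using monoD[OF \<open>mono g\<close>, of t t'] by simp
      then show False
        using t' above \<open>0 < \<delta>\<close> by simp
    qed
    then show ?thesis
      using t' above \<open>0 < \<delta>\<close> by (intro exI[of _ t']) (simp add: tracking_step_def)
  qed
qed

lemma exists_tracking_sequence:
  fixes G H :: "'n::finite \<Rightarrow> real \<Rightarrow> real"
  assumes "\<And>i. mono (G i)" "\<And>i t. 0 \<le> G i t \<and> G i t \<le> 1" "\<And>i t. 0 \<le> H i t \<and> H i t \<le> 1"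
    and "\<And>i v. 0 < v \<Longrightarrow> v < 1 \<Longrightarrow> \<exists>t. G i t = v" and "\<And>n. 0 < \<delta> n"
  shows "\<exists>xs. xs 0 = y \<and> (\<forall>n i. tracking_step (G i) (H i) (\<delta> n) (xs n $ i) (xs (Suc n) $ i))"
proof -
  have "\<exists>y. \<forall>i. tracking_step (G i) (H i) (\<delta> n) (x$i) (y$i)" for n x
  proof -
    have "\<forall>i. \<exists>t'. tracking_step (G i) (H i) (\<delta> n) (x$i) t'"
      using exists_tracking_step assms by blast
    then obtain f where "\<forall>i. tracking_step (G i) (H i) (\<delta> n) (x$i) (f i)"
      by metis
    then show ?thesis
      by (intro exI[of _ "\<chi> i. f i"]) simp
  qed
  then obtain S where "\<And>n x i. tracking_step (G i) (H i) (\<delta> n) (x$i) (S n x $ i)"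
    by metis
  then show ?thesis
    by (intro exI[of _ "rec_nat y S"]) simp
qed

lemma convergent_tracking:
  fixes g h :: "real \<Rightarrow> real" and t :: "nat \<Rightarrow> real"
  assumes "mono g" "mono h" and g01: "\<And>t. 0 \<le> g t \<and> g t \<le> 1"
    and step: "\<And>n. tracking_step g h (\<delta> n) (t n) (t (Suc n))"
  shows "convergent (\<lambda>n. g (t n))"
proof -
  have "monoseq (\<lambda>n. g (t n))"
  proof (cases "g (t 0) \<le> h (t 0)")
    case True
    have below: "g (t n) \<le> h (t n)" for n
    proof (induction n)
      case (Suc n)
      then have "t n \<le> t (Suc n)" "g (t (Suc n)) \<le> h (t n)"
        using step[of n] by (auto simp: tracking_step_def)
      then show ?case
        using monoD[OF \<open>mono h\<close>] by (meson order_trans)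
    qed (use True in simp)
    have "incseq (\<lambda>n. g (t n))"
      using step below monoD[OF \<open>mono g\<close>] by (intro incseq_SucI) (auto simp: tracking_step_def)
    then show ?thesis
      by (simp add: monoseq_iff)
  next
    case False
    have above: "h (t n) \<le> g (t n)" for n
    proof (induction n)
      case (Suc n)
      then have "t (Suc n) \<le> t n" "h (t n) \<le> g (t (Suc n))"
        using step[of n] by (auto simp: tracking_step_def)
      then show ?case
        using monoD[OF \<open>mono h\<close>] by (meson order_trans)
    qed (use False in simp)
    have "decseq (\<lambda>n. g (t n))"
      using step above monoD[OF \<open>mono g\<close>] by (intro decseq_SucI) (auto simp: tracking_step_def)
    then show ?thesis
      by (simp add: monoseq_iff)
  qed
  then show ?thesis
    using g01 by (intro Bseq_monoseq_convergent BseqI'[of _ 1]) auto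
qed

lemma alternating_drift:
  fixes d :: "nat \<Rightarrow> real"
  assumes step: "\<And>n. \<bar>d (Suc n) + d n\<bar> \<le> K * \<epsilon> / 2 ^ Suc n"
  shows "\<bar>(-1)^n * d n - d 0\<bar> \<le> K * \<epsilon>"
proof -
  have drift: "\<bar>(-1)^n * d n - d 0\<bar> \<le> K * \<epsilon> * (1 - 1 / 2 ^ n)" for n
  proof (induction n)
    case (Suc n)
    have "(-1)^Suc n * d (Suc n) - d 0 = ((-1)^n * d n - d 0) - (-1)^n * (d (Suc n) + d n)"
      by (simp add: algebra_simps)
    moreover have "\<bar>(-1)^n * (d (Suc n) + d n)\<bar> = \<bar>d (Suc n) + d n\<bar>"
      by (simp add: abs_mult)
    moreover have "K * \<epsilon> * (1 - 1 / 2 ^ n) + K * \<epsilon> / 2 ^ Suc n = K * \<epsilon> * (1 - 1 / 2 ^ Suc n)"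
      by (simp add: field_simps)
    ultimately show ?case
      using Suc step[of n] abs_triangle_ineq4[of "(-1)^n * d n - d 0" "(-1)^n * (d (Suc n) + d n)"]
      by linarith
  qed simp
  have "0 \<le> K * \<epsilon> / 2 ^ Suc 0"
    using step[of 0] by (rule order_trans[OF abs_ge_zero])
  then have "0 \<le> K * \<epsilon>"
    by simp
  then have "K * \<epsilon> * (1 - 1 / 2 ^ n) \<le> K * \<epsilon>"
    by (simp add: mult_left_le)
  then show ?thesis
    using drift[of n] by linarith
qed

lemma alternating_relation_vanishes:
  fixes D :: "real^'n \<Rightarrow> real" and G H :: "'n \<Rightarrow> real \<Rightarrow> real"
  assumes lip: "\<And>a b. \<bar>D a - D b\<bar> \<le> (\<Sum>i\<in>UNIV. \<bar>a$i - b$i\<bar>)"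
    and G_mono: "\<And>i. mono (G i)" and H_mono: "\<And>i. mono (H i)"
    and G01: "\<And>i t. 0 \<le> G i t \<and> G i t \<le> 1" and H01: "\<And>i t. 0 \<le> H i t \<and> H i t \<le> 1"
    and G_surj: "\<And>i v. 0 < v \<Longrightarrow> v < 1 \<Longrightarrow> \<exists>t. G i t = v"
    and rel: "\<And>x. D (\<chi> i. G i (x$i)) + D (\<chi> i. H i (x$i)) = 0"
  shows "D (\<chi> i. G i (x0$i)) = 0"
proof -
  define N where "N = real CARD('n)"
  have bound: "\<bar>2 * D (\<chi> i. G i (x0$i))\<bar> \<le> (2 * N + 1) * \<epsilon>" if "0 < \<epsilon>" for \<epsilon>
  proof -
    obtain xs where "xs 0 = x0"
      and step: "\<And>n i. tracking_step (G i) (H i) (\<epsilon> / 2 ^ Suc n) (xs n $ i) (xs (Suc n) $ i)"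
      using exists_tracking_sequence[where G=G and H=H and \<delta>="\<lambda>n. \<epsilon> / 2 ^ Suc n" and y=x0]
        G_mono G01 H01 G_surj \<open>0 < \<epsilon>\<close> by auto
    define d where "d n = D (\<chi> i. G i (xs n $ i))" for n
    have "\<bar>d (Suc n) + d n\<bar> \<le> N * \<epsilon> / 2 ^ Suc n" for n
    proof -
      have "d (Suc n) + d n = d (Suc n) - D (\<chi> i. H i (xs n $ i))"
        using rel[of "xs n"] by (simp add: d_def eq_neg_iff_add_eq_0)
      also have "\<bar>\<dots>\<bar> \<le> (\<Sum>i\<in>UNIV. \<bar>G i (xs (Suc n) $ i) - H i (xs n $ i)\<bar>)"
        using lip[of "\<chi> i. G i (xs (Suc n) $ i)" "\<chi> i. H i (xs n $ i)"] by (simp add: d_def)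
      also have "\<dots> \<le> (\<Sum>i\<in>(UNIV::'n set). \<epsilon> / 2 ^ Suc n)"
        using step by (intro sum_mono) (simp add: tracking_step_def)
      finally show ?thesis
        by (simp add: N_def)
    qed
    then have drift: "\<bar>(-1)^n * d n - d 0\<bar> \<le> N * \<epsilon>" for n
      by (rule alternating_drift)
    have "convergent (\<lambda>n. G i (xs n $ i))" for i
      by (rule convergent_tracking[where g="G i" and h="H i" and t="\<lambda>n. xs n $ i",
            OF G_mono H_mono G01 step])
    then obtain L where "\<And>i. (\<lambda>n. G i (xs n $ i)) \<longlonglongrightarrow> L i"
      unfolding convergent_def by metis
    then have "(\<lambda>n. d (Suc n) - d n) \<longlonglongrightarrow> D (\<chi> i. L i) - D (\<chi> i. L i)"
      unfolding d_def by (intro tendsto_diff tendsto_lipschitz_vec[OF lip] LIMSEQ_Suc) auto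
    then have "(\<lambda>n. \<bar>d (Suc n) - d n\<bar>) \<longlonglongrightarrow> 0"
      by (simp add: tendsto_rabs_zero)
    from order_tendstoD(2)[OF this \<open>0 < \<epsilon>\<close>]
    obtain n where "\<bar>d (Suc n) - d n\<bar> < \<epsilon>"
      by (auto simp: eventually_sequentially)
    moreover have "2 * d 0 = - ((-1)^n * d n - d 0) - ((-1)^Suc n * d (Suc n) - d 0)
        + (-1)^n * (d n - d (Suc n))"
      by (simp add: algebra_simps)
    moreover have "\<bar>(-1)^n * (d n - d (Suc n))\<bar> = \<bar>d (Suc n) - d n\<bar>"
      by (simp add: abs_mult abs_minus_commute)
    ultimately show ?thesis
      using drift[of n] drift[of "Suc n"] \<open>xs 0 = x0\<close> by (simp add: d_def distrib_right)
  qed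
  have "0 < 2 * N + 1"
    by (simp add: N_def)
  then have "\<bar>2 * D (\<chi> i. G i (x0$i))\<bar> \<le> 0 + e" if "0 < e" for e
    using bound[of "e / (2 * N + 1)"] that by simp
  then have "\<bar>2 * D (\<chi> i. G i (x0$i))\<bar> \<le> 0"
    by (rule field_le_epsilon)
  then show ?thesis
    by simp
qed

section \<open>Random vectors with continuous marginals\<close>

lemma mono_le_iff_of_neq:
  fixes f :: "'a::linorder \<Rightarrow> 'b::linorder"
  assumes "mono f" "f s \<noteq> f t"
  shows "s \<le> t \<longleftrightarrow> f s \<le> f t"
  using assms by (metis le_cases monoD order_antisym)

definition marginally_symmetric :: "'a measure \<Rightarrow> ('a \<Rightarrow> real^'n) \<Rightarrow> bool" where
  "marginally_symmetric M X \<longleftrightarrow>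
     (\<forall>i. distr M borel (\<lambda>\<omega>. X \<omega> $ i) = distr M borel (\<lambda>\<omega>. - (X \<omega> $ i)))"

definition copula_centrally_symmetric :: "'a measure \<Rightarrow> ('a \<Rightarrow> real^'n) \<Rightarrow> bool" where
  "copula_centrally_symmetric M X \<longleftrightarrow>
     distr M borel (copula_vec M X) = distr M borel (\<lambda>\<omega>. (\<chi> i. 1) - copula_vec M X \<omega>)"

definition centrally_symmetric :: "'a measure \<Rightarrow> ('a \<Rightarrow> real^'n) \<Rightarrow> bool" where
  "centrally_symmetric M X \<longleftrightarrow> distr M borel X = distr M borel (\<lambda>\<omega>. - X \<omega>)"

locale continuous_marginals = prob_space M for M :: "'a measure" +
  fixes X :: "'a \<Rightarrow> real^'n"
  assumes X_measurable[measurable]: "X \<in> borel_measurable M"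
    and no_atoms: "\<And>i t. measure M {\<omega> \<in> space M. X \<omega> $ i = t} = 0"
begin

abbreviation "F \<equiv> marg_cdf M X"

abbreviation cdf_point :: "real^'n \<Rightarrow> real^'n" where
  "cdf_point x \<equiv> \<chi> i. F i (x $ i)"

abbreviation surv_point :: "real^'n \<Rightarrow> real^'n" where
  "surv_point x \<equiv> \<chi> i. marg_surv M X i (- (x $ i))"

lemma real_distribution_component: "real_distribution (distr M borel (\<lambda>\<omega>. X \<omega> $ i))"
  by (intro real_distribution_distr) simp

lemma marg_cdf_eq_cdf: "F i = cdf (distr M borel (\<lambda>\<omega>. X \<omega> $ i))"
  by (rule ext) (simp add: marg_cdf_def cdf_def measure_distr vimage_def Int_def conj_commute)

lemma marg_cdf_mono: "mono (F i)"
  unfolding marg_cdf_eq_cdf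
  using finite_borel_measure.cdf_nondecreasing[OF real_distribution.finite_borel_measure_M]
    real_distribution_component by (blast intro: monoI)

lemma marg_cdf_nonneg: "0 \<le> F i t"
  by (simp add: marg_cdf_def)

lemma marg_cdf_le_1: "F i t \<le> 1"
  by (simp add: marg_cdf_def)

lemma isCont_marg_cdf: "isCont (F i) t"
proof -
  have "measure (distr M borel (\<lambda>\<omega>. X \<omega> $ i)) {t} = 0"
    using no_atoms by (simp add: measure_distr vimage_def Int_def conj_commute)
  then show ?thesis
    unfolding marg_cdf_eq_cdf using real_distribution_component
    by (simp add: finite_borel_measure.isCont_cdf real_distribution.finite_borel_measure_M)
qed

lemma marg_cdf_at_top: "(F i \<longlongrightarrow> 1) at_top"
  unfolding marg_cdf_eq_cdf
  using real_distribution.cdf_lim_at_top_prob[OF real_distribution_component] .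

lemma marg_cdf_at_bot: "(F i \<longlongrightarrow> 0) at_bot"
  unfolding marg_cdf_eq_cdf
  using finite_borel_measure.cdf_lim_at_bot[OF
      real_distribution.finite_borel_measure_M[OF real_distribution_component]] .

lemma marg_cdf_surj:
  assumes "0 < v" "v < 1"
  shows "\<exists>t. F i t = v"
proof -
  obtain a where a: "F i a < v"
    using order_tendstoD(2)[OF marg_cdf_at_bot assms(1)] by (auto simp: eventually_at_bot_linorder)
  obtain b where b: "v < F i b"
    using order_tendstoD(1)[OF marg_cdf_at_top assms(2)] by (auto simp: eventually_at_top_linorder)
  then have "a \<le> b"
    using a monoD[OF marg_cdf_mono[of i], of b a] by (cases "a \<le> b") auto
  then show ?thesis
    using IVT[of "F i" a v b] a b isCont_marg_cdf by auto
qed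

lemma copula_vec_nth[simp]: "copula_vec M X \<omega> $ i = F i (X \<omega> $ i)"
  by (simp add: copula_vec_def)

lemma marg_cdf_component_measurable[measurable]: "(\<lambda>\<omega>. F i (X \<omega> $ i)) \<in> borel_measurable M"
  using measurable_compose[OF _ borel_measurable_mono[OF marg_cdf_mono]] by measurable

lemma copula_vec_measurable[measurable]: "copula_vec M X \<in> borel_measurable M"
  by (rule borel_measurable_vecI) simp

lemma measure_marg_cdf_le_upper:
  assumes "0 \<le> v" "v < 1"
  shows "measure M {\<omega>\<in>space M. F i (X \<omega> $ i) \<le> v} \<le> v"
proof (rule dense_ge_bounded[OF assms(2)])
  fix w assume w: "v < w" "w < 1"
  then obtain s where s: "F i s = w"
    using marg_cdf_surj assms by fastforce
  have "X \<omega> $ i \<le> s" if "F i (X \<omega> $ i) \<le> v" for \<omega>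
    using monoD[OF marg_cdf_mono[of i], of s "X \<omega> $ i"] that s w by (cases "X \<omega> $ i \<le> s") auto
  then have "measure M {\<omega>\<in>space M. F i (X \<omega> $ i) \<le> v} \<le> F i s"
    unfolding marg_cdf_def by (intro finite_measure_mono) auto
  then show "measure M {\<omega>\<in>space M. F i (X \<omega> $ i) \<le> v} \<le> w"
    using s by simp
qed

lemma measure_marg_cdf_less_lower:
  assumes "0 < v" "v \<le> 1"
  shows "v \<le> measure M {\<omega>\<in>space M. F i (X \<omega> $ i) < v}"
proof (rule dense_le_bounded[OF assms(1)])
  fix w assume w: "0 < w" "w < v"
  then obtain s where s: "F i s = w"
    using marg_cdf_surj assms by fastforce
  have "{\<omega>\<in>space M. X \<omega> $ i \<le> s} \<subseteq> {\<omega>\<in>space M. F i (X \<omega> $ i) < v}"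
    using s w monoD[OF marg_cdf_mono[of i], of _ s] by force
  then have "F i s \<le> measure M {\<omega>\<in>space M. F i (X \<omega> $ i) < v}"
    unfolding marg_cdf_def by (intro finite_measure_mono) auto
  then show "w \<le> measure M {\<omega>\<in>space M. F i (X \<omega> $ i) < v}"
    using s by simp
qed

lemma prob_integral_transform:
  shows prob_integral_transform_less: "measure M {\<omega>\<in>space M. F i (X \<omega> $ i) < t} = max 0 (min 1 t)"
    and prob_integral_transform_le: "measure M {\<omega>\<in>space M. F i (X \<omega> $ i) \<le> t} = max 0 (min 1 t)"
proof -
  have less_le: "measure M {\<omega>\<in>space M. F i (X \<omega> $ i) < t} \<le> measure M {\<omega>\<in>space M. F i (X \<omega> $ i) \<le> t}"
    by (intro finite_measure_mono) auto
  have le_upper: "measure M {\<omega>\<in>space M. F i (X \<omega> $ i) \<le> t} \<le> max 0 (min 1 t)"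
  proof -
    consider "t < 0" | "0 \<le> t" "t < 1" | "1 \<le> t" by linarith
    then show ?thesis
    proof cases
      case 1
      then have "\<not> F i s \<le> t" for s
        using marg_cdf_nonneg[of i s] by linarith
      then have "{\<omega>\<in>space M. F i (X \<omega> $ i) \<le> t} = {}"
        by auto
      then show ?thesis
        by (metis measure_empty max.cobounded1)
    qed (use measure_marg_cdf_le_upper in auto)
  qed
  have less_lower: "max 0 (min 1 t) \<le> measure M {\<omega>\<in>space M. F i (X \<omega> $ i) < t}"
  proof -
    consider "t \<le> 0" | "0 < t" "t \<le> 1" | "1 < t" by linarith
    then show ?thesis
    proof cases
      case 3
      then have "F i s < t" for s
        using marg_cdf_le_1[of i s] by linarith
      then have "{\<omega>\<in>space M. F i (X \<omega> $ i) < t} = space M"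
        by auto
      then show ?thesis using 3 by (simp add: prob_space)
    qed (use measure_marg_cdf_less_lower in auto)
  qed
  show "measure M {\<omega>\<in>space M. F i (X \<omega> $ i) < t} = max 0 (min 1 t)"
    and "measure M {\<omega>\<in>space M. F i (X \<omega> $ i) \<le> t} = max 0 (min 1 t)"
    using less_le le_upper less_lower by linarith+
qed

lemma AE_marg_cdf_neq: "AE \<omega> in M. \<forall>i. F i (X \<omega> $ i) \<noteq> v i"
proof -
  have "measure M {\<omega>\<in>space M. F i (X \<omega> $ i) = v i} = 0" for i
  proof -
    have "{\<omega>\<in>space M. F i (X \<omega> $ i) = v i}
        = {\<omega>\<in>space M. F i (X \<omega> $ i) \<le> v i} - {\<omega>\<in>space M. F i (X \<omega> $ i) < v i}"
      by auto
    also have "measure M \<dots> = measure M {\<omega>\<in>space M. F i (X \<omega> $ i) \<le> v i}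
        - measure M {\<omega>\<in>space M. F i (X \<omega> $ i) < v i}"
      by (intro finite_measure_Diff) auto
    finally show ?thesis
      by (simp add: prob_integral_transform)
  qed
  then have "AE \<omega> in M. F i (X \<omega> $ i) \<noteq> v i" for i
    by (subst AE_iff_measurable[OF _ refl]) (auto simp: emeasure_eq_measure)
  then show ?thesis
    by (subst AE_all_countable) auto
qed

lemma AE_component_neq: "AE \<omega> in M. \<forall>i. X \<omega> $ i \<noteq> v i"
proof -
  have "AE \<omega> in M. X \<omega> $ i \<noteq> v i" for i
    using no_atoms[of i "v i"] by (subst AE_iff_measurable[OF _ refl]) (auto simp: emeasure_eq_measure)
  then show ?thesis
    by (subst AE_all_countable) auto
qed

lemma prob_one_minus_marg_cdf_le:
  "measure M {\<omega>\<in>space M. 1 - F i (X \<omega> $ i) \<le> t} = max 0 (min 1 t)"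
proof -
  have "{\<omega>\<in>space M. 1 - F i (X \<omega> $ i) \<le> t} = space M - {\<omega>\<in>space M. F i (X \<omega> $ i) < 1 - t}"
    by auto
  then show ?thesis
    by (simp add: prob_compl prob_integral_transform_less)
qed

lemma copula_lipschitz: "\<bar>copula M X a - copula M X b\<bar> \<le> (\<Sum>i\<in>UNIV. \<bar>a$i - b$i\<bar>)"
  unfolding copula_def
  by (rule joint_cdf_lipschitz) (auto simp: prob_integral_transform_le)

lemma surv_copula_lipschitz: "\<bar>surv_copula M X a - surv_copula M X b\<bar> \<le> (\<Sum>i\<in>UNIV. \<bar>a$i - b$i\<bar>)"
  unfolding surv_copula_def
  by (rule joint_cdf_lipschitz) (auto simp: prob_one_minus_marg_cdf_le)

lemma copula_delta_lipschitz: "\<bar>copula_delta M X a - copula_delta M X b\<bar> \<le> (\<Sum>i\<in>UNIV. \<bar>a$i - b$i\<bar>)"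
  using copula_lipschitz[of a b] surv_copula_lipschitz[of a b]
  unfolding copula_delta_def by (auto simp: abs_le_iff field_simps)

lemma copula_sym_lipschitz: "\<bar>copula_sym M X a - copula_sym M X b\<bar> \<le> (\<Sum>i\<in>UNIV. \<bar>a$i - b$i\<bar>)"
  using copula_lipschitz[of a b] surv_copula_lipschitz[of a b]
  unfolding copula_sym_def by (auto simp: abs_le_iff field_simps)

lemma copula_sym_marginal: "copula_sym M X (\<chi> j. if j = i then t else 1) = max 0 (min 1 t)"
proof -
  have "copula M X (\<chi> j. if j = i then t else 1) = max 0 (min 1 t)"
    unfolding copula_def
    by (subst joint_cdf_marginal) (simp_all add: marg_cdf_le_1 prob_integral_transform_le)
  moreover have "surv_copula M X (\<chi> j. if j = i then t else 1) = max 0 (min 1 t)"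
    unfolding surv_copula_def
    by (subst joint_cdf_marginal) (simp_all add: marg_cdf_nonneg prob_one_minus_marg_cdf_le)
  ultimately show ?thesis
    by (simp add: copula_sym_def)
qed

lemma joint_cdf_eq_copula: "joint_cdf M X x = copula M X (cdf_point x)"
  unfolding copula_def joint_cdf_def
proof (rule finite_measure_eq_AE)
  show "AE \<omega> in M. (\<omega> \<in> {\<omega> \<in> space M. \<forall>i. X \<omega> $ i \<le> x $ i}) =
      (\<omega> \<in> {\<omega> \<in> space M. \<forall>i. copula_vec M X \<omega> $ i \<le> cdf_point x $ i})"
    using AE_marg_cdf_neq[of "\<lambda>i. F i (x$i)"]
  proof eventually_elim
    case (elim \<omega>)
    then have "X \<omega> $ i \<le> x $ i \<longleftrightarrow> F i (X \<omega> $ i) \<le> F i (x $ i)" for i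
      using mono_le_iff_of_neq[OF marg_cdf_mono] by blast
    then show ?case
      by simp
  qed
qed measurable

lemma joint_surv_eq_surv_copula: "joint_surv M X (- x) = surv_copula M X (surv_point x)"
  unfolding surv_copula_def joint_surv_def joint_cdf_def
proof (rule finite_measure_eq_AE)
  show "AE \<omega> in M. (\<omega> \<in> {\<omega> \<in> space M. \<forall>i. (- x) $ i < X \<omega> $ i}) =
      (\<omega> \<in> {\<omega> \<in> space M. \<forall>i. ((\<chi> i. 1) - copula_vec M X \<omega>) $ i \<le> surv_point x $ i})"
    using AE_marg_cdf_neq[of "\<lambda>i. F i (- x$i)"]
  proof eventually_elim
    case (elim \<omega>)
    have "- x $ i < X \<omega> $ i \<longleftrightarrow> F i (- x $ i) \<le> F i (X \<omega> $ i)" for i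
    proof -
      have "F i (- x $ i) \<noteq> F i (X \<omega> $ i)"
        using elim by metis
      then show ?thesis
        using mono_le_iff_of_neq[OF marg_cdf_mono] by (metis order_less_le)
    qed
    then show ?case
      by (simp add: marg_surv_def)
  qed
qed measurable

lemma joint_surv_neg_eq_joint_cdf_neg: "joint_surv M X (- x) = joint_cdf M (\<lambda>\<omega>. - X \<omega>) x"
  unfolding joint_surv_def joint_cdf_def
proof (rule finite_measure_eq_AE)
  show "AE \<omega> in M. (\<omega> \<in> {\<omega> \<in> space M. \<forall>i. (- x) $ i < X \<omega> $ i}) =
      (\<omega> \<in> {\<omega> \<in> space M. \<forall>i. (- X \<omega>) $ i \<le> x $ i})"
    using AE_component_neq[of "\<lambda>i. - (x$i)"]
  proof eventually_elim
    case (elim \<omega>)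
    then have "- x $ i < X \<omega> $ i \<longleftrightarrow> - X \<omega> $ i \<le> x $ i" for i
      by (metis minus_le_iff order_less_le)
    then show ?case
      by simp
  qed
qed measurable

lemma joint_cdf_minus_joint_surv_decomposition:
  "joint_cdf M X x - joint_surv M X (- x) =
     (copula_sym M X (cdf_point x) - copula_sym M X (surv_point x))
   + (copula_delta M X (cdf_point x) + copula_delta M X (surv_point x))"
  unfolding joint_cdf_eq_copula joint_surv_eq_surv_copula copula_sym_def copula_delta_def
  by (simp add: field_simps)

subsection \<open>Symmetry\<close>

lemma cdf_neg_component: "cdf (distr M borel (\<lambda>\<omega>. - (X \<omega> $ i))) t = marg_surv M X i (- t)"
proof -
  have "{\<omega>\<in>space M. - (X \<omega> $ i) \<le> t}
      = (space M - {\<omega>\<in>space M. X \<omega> $ i \<le> - t}) \<union> {\<omega>\<in>space M. X \<omega> $ i = - t}"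
    by auto
  also have "measure M \<dots> = measure M (space M - {\<omega>\<in>space M. X \<omega> $ i \<le> - t})
      + measure M {\<omega>\<in>space M. X \<omega> $ i = - t}"
    by (intro finite_measure_Union) auto
  finally show ?thesis
    by (simp add: cdf_def measure_distr vimage_def Int_def conj_commute prob_compl
        no_atoms marg_surv_def marg_cdf_def)
qed

lemma marginally_symmetric_iff_marg_surv:
  "marginally_symmetric M X \<longleftrightarrow> (\<forall>i t. marg_surv M X i (- t) = F i t)"
proof -
  have "distr M borel (\<lambda>\<omega>. X \<omega> $ i) = distr M borel (\<lambda>\<omega>. - (X \<omega> $ i))
      \<longleftrightarrow> cdf (distr M borel (\<lambda>\<omega>. X \<omega> $ i)) = cdf (distr M borel (\<lambda>\<omega>. - (X \<omega> $ i)))" for i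
    using cdf_unique[OF real_distribution_component real_distribution_distr] by force
  then show ?thesis
    unfolding marginally_symmetric_def by (auto simp: fun_eq_iff cdf_neg_component marg_cdf_eq_cdf)
qed

lemma copula_sym_bracket_zero_iff:
  "(\<forall>x. copula_sym M X (cdf_point x) - copula_sym M X (surv_point x) = 0)
    \<longleftrightarrow> marginally_symmetric M X"
proof
  assume zero: "\<forall>x. copula_sym M X (cdf_point x) - copula_sym M X (surv_point x) = 0"
  have "marg_surv M X i (- t) = F i t" for i t
  proof -
    define x where "x s = (\<chi> j. if j = i then t else s)" for s
    have "((\<lambda>s. cdf_point (x s) $ j) \<longlongrightarrow> (\<chi> j. if j = i then F i t else 1) $ j) at_top" for j
      using marg_cdf_at_top[of j] by (simp add: x_def)
    from tendsto_lipschitz_vec[OF copula_sym_lipschitz this]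
    have lim_cdf: "((\<lambda>s. copula_sym M X (cdf_point (x s))) \<longlongrightarrow> F i t) at_top"
      by (simp add: copula_sym_marginal marg_cdf_nonneg marg_cdf_le_1)
    have "((\<lambda>s. 1 - F j (- s)) \<longlongrightarrow> 1 - 0) at_top" for j
      by (intro tendsto_diff tendsto_const filterlim_compose[OF marg_cdf_at_bot filterlim_uminus_at_bot_at_top])
    then have "((\<lambda>s. surv_point (x s) $ j) \<longlongrightarrow> (\<chi> j. if j = i then marg_surv M X i (- t) else 1) $ j) at_top" for j
      by (simp add: x_def marg_surv_def)
    from tendsto_lipschitz_vec[OF copula_sym_lipschitz this]
    have "((\<lambda>s. copula_sym M X (surv_point (x s))) \<longlongrightarrow> marg_surv M X i (- t)) at_top"
      by (simp add: copula_sym_marginal marg_surv_def marg_cdf_nonneg marg_cdf_le_1)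
    moreover have "copula_sym M X (surv_point (x s)) = copula_sym M X (cdf_point (x s))" for s
      using zero by simp
    ultimately show ?thesis
      using tendsto_unique[OF trivial_limit_at_top_linorder _ lim_cdf] by simp
  qed
  then show "marginally_symmetric M X"
    by (simp add: marginally_symmetric_iff_marg_surv)
next
  assume "marginally_symmetric M X"
  then show "\<forall>x. copula_sym M X (cdf_point x) - copula_sym M X (surv_point x) = 0"
    by (simp add: marginally_symmetric_iff_marg_surv)
qed

lemma copula_delta_zero_on_range:
  assumes "\<forall>x. copula_delta M X (cdf_point x) + copula_delta M X (surv_point x) = 0"
  shows "copula_delta M X (cdf_point x) = 0"
proof (rule alternating_relation_vanishes[where H="\<lambda>i t. marg_surv M X i (- t)"])
  show "mono (\<lambda>t. marg_surv M X i (- t))" for i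
    using monoD[OF marg_cdf_mono[of i]] by (intro monoI) (simp add: marg_surv_def)
  show "0 \<le> marg_surv M X i (- t) \<and> marg_surv M X i (- t) \<le> 1" for i t
    using marg_cdf_nonneg[of i "- t"] marg_cdf_le_1[of i "- t"] by (simp add: marg_surv_def)
qed (use assms copula_delta_lipschitz marg_cdf_mono marg_cdf_nonneg marg_cdf_le_1 marg_cdf_surj in auto)

lemma copula_delta_zero_on_unit_cube:
  assumes zero: "\<forall>x. copula_delta M X (cdf_point x) + copula_delta M X (surv_point x) = 0"
    and u: "\<forall>i. 0 \<le> u$i \<and> u$i \<le> 1"
  shows "copula_delta M X u = 0"
proof -
  define v where "v e = (\<chi> i. max e (min (1 - e) (u$i)))" for e :: real
  have "((\<lambda>e. v e $ i) \<longlongrightarrow> max 0 (min (1 - 0) (u$i))) (at_right 0)" for i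
    unfolding v_def vec_lambda_beta by (intro tendsto_intros)
  then have "((\<lambda>e. v e $ i) \<longlongrightarrow> u $ i) (at_right 0)" for i
    using u by simp
  from tendsto_lipschitz_vec[OF copula_delta_lipschitz this]
  have "((\<lambda>e. copula_delta M X (v e)) \<longlongrightarrow> copula_delta M X u) (at_right 0)" .
  moreover have "eventually (\<lambda>e. copula_delta M X (v e) = 0) (at_right 0)"
  proof -
    have "copula_delta M X (v e) = 0" if "0 < e" "e < 1/2" for e
    proof -
      have "\<forall>i. \<exists>t. F i t = v e $ i"
        using marg_cdf_surj that by (simp add: v_def)
      then obtain f where "\<And>i. F i (f i) = v e $ i"
        by metis
      then have "v e = cdf_point (\<chi> i. f i)"
        by (simp add: vec_eq_iff)
      then show ?thesis
        using copula_delta_zero_on_range[OF zero, of "\<chi> i. f i"] by simp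
    qed
    then show ?thesis
      by (auto simp: eventually_at_right_field intro!: exI[of _ "1/2"])
  qed
  ultimately show ?thesis
    using tendsto_unique[OF trivial_limit_at_right_real] tendsto_eventually by metis
qed

lemma copula_delta_bracket_zero_iff:
  "(\<forall>x. copula_delta M X (cdf_point x) + copula_delta M X (surv_point x) = 0)
    \<longleftrightarrow> copula_centrally_symmetric M X"
proof
  assume zero: "\<forall>x. copula_delta M X (cdf_point x) + copula_delta M X (surv_point x) = 0"
  have "copula M X a = surv_copula M X a" for a
  proof -
    have "copula M X a = (if \<exists>j. a$j < 0 then 0 else copula M X (\<chi> j. min 1 (a$j)))"
      "surv_copula M X a = (if \<exists>j. a$j < 0 then 0 else surv_copula M X (\<chi> j. min 1 (a$j)))"
      unfolding copula_def surv_copula_def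
      by (rule joint_cdf_unit_cube; simp add: marg_cdf_nonneg marg_cdf_le_1)+
    moreover have "copula_delta M X (\<chi> j. min 1 (a$j)) = 0" if "\<not> (\<exists>j. a$j < 0)"
      using that by (intro copula_delta_zero_on_unit_cube[OF zero]) (auto simp: not_less)
    ultimately show ?thesis
      by (simp add: copula_delta_def)
  qed
  then show "copula_centrally_symmetric M X"
    unfolding copula_centrally_symmetric_def copula_def surv_copula_def
    by (intro joint_cdf_unique) (simp_all add: prob_space_axioms)
next
  assume "copula_centrally_symmetric M X"
  then have "copula M X a = surv_copula M X a" for a
    unfolding copula_centrally_symmetric_def copula_def surv_copula_def
    by (simp add: joint_cdf_eq_measure_distr)
  then show "\<forall>x. copula_delta M X (cdf_point x) + copula_delta M X (surv_point x) = 0"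
    by (simp add: copula_delta_def)
qed

lemma centrally_symmetric_iff_joint_cdf_eq_joint_surv:
  "centrally_symmetric M X \<longleftrightarrow> (\<forall>x. joint_cdf M X x = joint_surv M X (- x))"
proof -
  have "centrally_symmetric M X \<longleftrightarrow> (\<forall>x. joint_cdf M X x = joint_cdf M (\<lambda>\<omega>. - X \<omega>) x)"
  proof
    assume "centrally_symmetric M X"
    then show "\<forall>x. joint_cdf M X x = joint_cdf M (\<lambda>\<omega>. - X \<omega>) x"
      by (simp add: centrally_symmetric_def joint_cdf_eq_measure_distr)
  next
    assume "\<forall>x. joint_cdf M X x = joint_cdf M (\<lambda>\<omega>. - X \<omega>) x"
    then show "centrally_symmetric M X"
      unfolding centrally_symmetric_def by (intro joint_cdf_unique[OF prob_space_axioms]) auto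
  qed
  then show ?thesis
    by (simp add: joint_surv_neg_eq_joint_cdf_neg)
qed

lemma marginally_symmetric_if_centrally_symmetric:
  assumes "centrally_symmetric M X"
  shows "marginally_symmetric M X"
  unfolding marginally_symmetric_def
proof
  fix i
  have "distr M borel (\<lambda>\<omega>. X \<omega> $ i) = distr (distr M borel X) borel (\<lambda>v. v $ i)"
    by (simp add: distr_distr comp_def)
  also have "\<dots> = distr (distr M borel (\<lambda>\<omega>. - X \<omega>)) borel (\<lambda>v. v $ i)"
    using assms by (simp add: centrally_symmetric_def)
  also have "\<dots> = distr M borel (\<lambda>\<omega>. - (X \<omega> $ i))"
    by (simp add: distr_distr comp_def)
  finally show "distr M borel (\<lambda>\<omega>. X \<omega> $ i) = distr M borel (\<lambda>\<omega>. - (X \<omega> $ i))" .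
qed

lemma centrally_symmetric_iff:
  "centrally_symmetric M X \<longleftrightarrow> marginally_symmetric M X \<and> copula_centrally_symmetric M X"
proof
  assume cs: "centrally_symmetric M X"
  then have ms: "marginally_symmetric M X"
    by (rule marginally_symmetric_if_centrally_symmetric)
  have "copula_delta M X (cdf_point x) + copula_delta M X (surv_point x) = 0" for x
    using joint_cdf_minus_joint_surv_decomposition[of x] cs ms
    unfolding centrally_symmetric_iff_joint_cdf_eq_joint_surv copula_sym_bracket_zero_iff[symmetric]
    by simp
  with ms show "marginally_symmetric M X \<and> copula_centrally_symmetric M X"
    by (simp add: copula_delta_bracket_zero_iff[symmetric])
next
  assume "marginally_symmetric M X \<and> copula_centrally_symmetric M X"
  then have "joint_cdf M X x - joint_surv M X (- x) = 0" for x
    unfolding joint_cdf_minus_joint_surv_decomposition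
    using copula_sym_bracket_zero_iff copula_delta_bracket_zero_iff by simp
  then show "centrally_symmetric M X"
    unfolding centrally_symmetric_iff_joint_cdf_eq_joint_surv by simp
qed

end

theorem theorem1:
  fixes M :: "'a measure" and R :: "'a \<Rightarrow> real^'n" and c :: "real^'n"
  assumes "prob_space M"
    and "R \<in> borel_measurable M"
    and cont_marg: "\<And>i t. measure M {\<omega> \<in> space M. R \<omega> $ i = t} = 0"
  defines "X \<equiv> (\<lambda>\<omega>. R \<omega> - c)"
  defines "Fx \<equiv> (\<lambda>x::real^'n. \<chi> i. marg_cdf M X i (x $ i))"
  defines "Fbx \<equiv> (\<lambda>x::real^'n. \<chi> i. marg_surv M X i (- (x $ i)))"
  defines "B1 \<equiv> (\<lambda>x. copula_sym M X (Fx x) - copula_sym M X (Fbx x))"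
  defines "B2 \<equiv> (\<lambda>x. copula_delta M X (Fx x) + copula_delta M X (Fbx x))"
  shows "(\<forall>x. joint_cdf M X x - joint_surv M X (- x) = B1 x + B2 x)
    \<and> ((\<forall>x. B1 x = 0) \<longleftrightarrow>
         (\<forall>i. distr M borel (\<lambda>\<omega>. X \<omega> $ i) = distr M borel (\<lambda>\<omega>. - (X \<omega> $ i))))
    \<and> ((\<forall>x. B2 x = 0) \<longleftrightarrow>
         distr M borel (copula_vec M X) = distr M borel (\<lambda>\<omega>. (\<chi> i. 1) - copula_vec M X \<omega>))
    \<and> (distr M borel X = distr M borel (\<lambda>\<omega>. - X \<omega>) \<longleftrightarrow>
         ((\<forall>i. distr M borel (\<lambda>\<omega>. X \<omega> $ i) = distr M borel (\<lambda>\<omega>. - (X \<omega> $ i)))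
          \<and> distr M borel (copula_vec M X) = distr M borel (\<lambda>\<omega>. (\<chi> i. 1) - copula_vec M X \<omega>)))"
proof -
  interpret prob_space M by fact
  have "X \<in> borel_measurable M"
    unfolding X_def using assms(2) by measurable
  moreover have "measure M {\<omega> \<in> space M. X \<omega> $ i = t} = 0" for i t
  proof -
    have "{\<omega> \<in> space M. X \<omega> $ i = t} = {\<omega> \<in> space M. R \<omega> $ i = t + c $ i}"
      by (auto simp: X_def)
    then show ?thesis
      using cont_marg by simp
  qed
  ultimately interpret continuous_marginals M X
    by unfold_locales
  show ?thesis
    using joint_cdf_minus_joint_surv_decomposition copula_sym_bracket_zero_iff
      copula_delta_bracket_zero_iff centrally_symmetric_iff
    unfolding B1_def B2_def Fx_def Fbx_def marginally_symmetric_def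
      copula_centrally_symmetric_def centrally_symmetric_def
    by simp
qed

end
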